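(* Let $2\le r_1<r_2$ be integers and $n$ such that $h_0:=n-5-2(r_1+r_2)\ge 3$. For every $j=0,1,\dots,h_0-3$, $$\rho([2,\,h_0-j,\,2+j])>\rho([h_0-(j+1),\,2,\,2+(j+1)]).$$ Equivalently, with $T^*=[h_0,2,2]$, $\alpha([h,q_1,q_2])=[h-1,q_1+1,q_2]$ and $\gamma([h,q_1,q_2])=[h-1,q_1,q_2+1]$, one has $\rho(\alpha^{h_0-j-2}(\gamma^j(T^* )))>\rho(\gamma^{j+1}(T^* ))$.
   Context: $\rho(G)$ denotes the spectral radius (largest eigenvalue of the adjacency matrix) of a graph $G$. For integers $h,q_1,q_2\ge 2$ and fixed integers $2\le r_1<r_2$, the tree $[h,q_1,q_2]$ is constructed as follows: take a vertex $u$; attach to $u$ a pendant path with $h$ edges; attach to $u$ a path with $q_1$ edges ending at a vertex $v_1$, and attach to $v_1$ exactly $r_1$ pendant paths with $2$ edges each; attach to $u$ a path with $q_2$ edges ending at a vertex $v_2$, and attach to $v_2$ exactly $r_2$ pendant paths with $2$ edges each. It has $n=1+h+q_1+q_2+2(r_1+r_2)$ vertices. $\mathfrak{F}(n)$ is the set of all such trees with $h,q_1,q_2\ge2$ and $h+q_1+q_2=n-1-2(r_1+r_2)$. *)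

theory Defs
  imports "Jordan_Normal_Form.Char_Poly"
begin

definition adj_mat :: "nat \<Rightarrow> (nat \<times> nat) set \<Rightarrow> real mat" where
  "adj_mat N E = mat N N (\<lambda>(i,j). if (i,j) \<in> E \<or> (j,i) \<in> E then 1 else 0)"

definition spec_rad :: "nat \<Rightarrow> (nat \<times> nat) set \<Rightarrow> real" where
  "spec_rad N E = Max {x. eigenvalue (adj_mat N E) x}"

definition path_edges :: "nat \<Rightarrow> nat \<Rightarrow> (nat \<times> nat) set" where
  "path_edges a b = {(i, i+1) | i. a \<le> i \<and> i < b}"

text \<open>The tree [h,q1,q2] (with parameters r1, r2).
  u = 0; pendant path 0,1,...,h; path 0, h+1, ..., h+q1 = v1;
  path 0, h+q1+1, ..., h+q1+q2 = v2; then r1 pendant paths of length 2 at v1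
  and r2 pendant paths of length 2 at v2.\<close>
definition tree_edges :: "nat \<Rightarrow> nat \<Rightarrow> nat \<Rightarrow> nat \<Rightarrow> nat \<Rightarrow> (nat \<times> nat) set" where
  "tree_edges r1 r2 h q1 q2 =
     (let v1 = h + q1; v2 = h + q1 + q2; b = h + q1 + q2 + 1; c = b + 2 * r1 in
      path_edges 0 h
      \<union> {(0, h + 1)} \<union> path_edges (h + 1) v1
      \<union> {(0, v1 + 1)} \<union> path_edges (v1 + 1) v2
      \<union> {(v1, b + 2 * k) | k. k < r1} \<union> {(b + 2 * k, b + 2 * k + 1) | k. k < r1}
      \<union> {(v2, c + 2 * k) | k. k < r2} \<union> {(c + 2 * k, c + 2 * k + 1) | k. k < r2})"

definition tree_order :: "nat \<Rightarrow> nat \<Rightarrow> nat \<Rightarrow> nat \<Rightarrow> nat \<Rightarrow> nat" where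
  "tree_order r1 r2 h q1 q2 = 1 + h + q1 + q2 + 2 * (r1 + r2)"

definition rho_tree :: "nat \<Rightarrow> nat \<Rightarrow> nat \<Rightarrow> nat \<Rightarrow> nat \<Rightarrow> real" where
  "rho_tree r1 r2 h q1 q2 = spec_rad (tree_order r1 r2 h q1 q2) (tree_edges r1 r2 h q1 q2)"

end

theory Submission
  imports Defs
begin

text \<open>Write \<open>\<lambda> = t + 1/t\<close> with \<open>t > 1\<close>. On each branch of \<open>[h,q1,q2]\<close> the eigen-equation
  is a linear recurrence solved by combinations of \<open>t\<^sup>k\<close> and \<open>t\<^sup>-\<^sup>k\<close>, so one can write down a
  vector that satisfies it at every vertex except the centre \<open>u\<close> and is positive once the
  leading coefficients of the two arms are nonnegative. Its defect at \<open>u\<close> is a positive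
  multiple of a secular function of \<open>X = t\<^sup>2\<close>; at a zero the vector is a positive eigenvector, so
  \<open>\<rho> = t + 1/t\<close> by the Collatz-Wielandt bound. Let \<open>t\<^sub>0\<close> be where the leading coefficient of the
  \<open>r\<^sub>2\<close>-arm vanishes. The secular function of \<open>[h\<^sub>0-j-1, 2, 3+j]\<close> is positive at \<open>t\<^sub>0\<close> and negative
  at \<open>t = r\<^sub>2\<close>, giving a root \<open>t\<^sub>2\<close>. Since \<open>r\<^sub>1 < r\<^sub>2\<close>, an elementary inequality in \<open>X\<close> shows that at
  \<open>t\<^sub>2\<close> the secular function of \<open>[2, h\<^sub>0-j, 2+j]\<close> is still positive, so its root \<open>t\<^sub>1\<close> lies beyond \<open>t\<^sub>2\<close>
  and \<open>t\<^sub>1 + 1/t\<^sub>1 > t\<^sub>2 + 1/t\<^sub>2\<close>.\<close>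

lemma finite_eigenvalues:
  fixes A :: "real mat"
  assumes "A \<in> carrier_mat n n"
  shows "finite {x. eigenvalue A x}"
proof -
  have "char_poly A \<noteq> 0"
    using degree_monic_char_poly[OF assms] by auto
  then have "finite {x. poly (char_poly A) x = 0}"
    by (rule poly_roots_finite)
  then show ?thesis
    using eigenvalue_root_char_poly[OF assms] by simp
qed

lemma collatz_wielandt_bound:
  fixes A :: "real mat"
  assumes A: "A \<in> carrier_mat n n"
    and nonneg: "\<And>i j. i < n \<Longrightarrow> j < n \<Longrightarrow> 0 \<le> A $$ (i, j)"
    and y: "y \<in> carrier_vec n" and pos: "\<And>i. i < n \<Longrightarrow> 0 < y $ i"
    and super: "\<And>i. i < n \<Longrightarrow> (A *\<^sub>v y) $ i \<le> \<beta> * y $ i"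
    and "eigenvalue A \<mu>"
  shows "\<bar>\<mu>\<bar> \<le> \<beta>"
proof -
  obtain v where v: "v \<in> carrier_vec n" "v \<noteq> 0\<^sub>v n" "A *\<^sub>v v = \<mu> \<cdot>\<^sub>v v"
    using \<open>eigenvalue A \<mu>\<close> A unfolding eigenvalue_def eigenvector_def by auto
  obtain i1 where i1: "i1 < n" "v $ i1 \<noteq> 0"
    using v(1,2) by (metis carrier_vecD eq_vecI index_zero_vec)
  define g where "g i = \<bar>v $ i\<bar> / y $ i" for i
  obtain i0 where i0: "i0 < n" and i0_max: "\<And>i. i < n \<Longrightarrow> g i \<le> g i0"
  proof -
    have "Max (g ` {..<n}) \<in> g ` {..<n}"
      using i1(1) by (intro Max_in) auto
    then obtain i0 where "i0 < n" "g i0 = Max (g ` {..<n})" by auto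
    then show thesis using that[of i0] by (auto intro: Max_ge)
  qed
  have "0 < g i1" using i1 pos by (simp add: g_def)
  then have c_pos: "0 < g i0" using i0_max[OF i1(1)] by simp
  have v_le: "\<bar>v $ j\<bar> \<le> g i0 * y $ j" if "j < n" for j
    using i0_max[OF that] pos[OF that] by (simp add: g_def field_simps)
  have mat_vec: "(A *\<^sub>v w) $ i0 = (\<Sum>j<n. A $$ (i0, j) * w $ j)" if "w \<in> carrier_vec n" for w
    using A that i0 by (simp add: mult_mat_vec_def scalar_prod_def row_def lessThan_atLeast0)
  have "\<mu> * v $ i0 = (\<Sum>j<n. A $$ (i0, j) * v $ j)"
    using v(1,3) i0 mat_vec[OF v(1)] by simp
  then have "\<bar>\<mu>\<bar> * \<bar>v $ i0\<bar> = \<bar>\<Sum>j<n. A $$ (i0, j) * v $ j\<bar>"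
    by (metis abs_mult)
  also have "\<dots> \<le> (\<Sum>j<n. A $$ (i0, j) * (g i0 * y $ j))"
    by (rule order.trans[OF sum_abs sum_mono])
      (use nonneg[OF i0] v_le in \<open>simp add: abs_mult mult_left_mono\<close>)
  also have "\<dots> = g i0 * (A *\<^sub>v y) $ i0"
    by (simp add: mat_vec[OF y] sum_distrib_left algebra_simps)
  also have "\<dots> \<le> g i0 * (\<beta> * y $ i0)"
    using super[OF i0] c_pos by simp
  also have "\<dots> = \<beta> * \<bar>v $ i0\<bar>"
    using pos[OF i0] by (simp add: g_def)
  finally have "\<bar>\<mu>\<bar> * \<bar>v $ i0\<bar> \<le> \<beta> * \<bar>v $ i0\<bar>" .
  moreover have "0 < \<bar>v $ i0\<bar>"
    using c_pos pos[OF i0] by (simp add: g_def zero_less_divide_iff)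
  ultimately show ?thesis by simp
qed

lemma spec_rad_eq_pos_eigenvector:
  assumes "0 < N" and v: "v \<in> carrier_vec N" and pos: "\<And>i. i < N \<Longrightarrow> 0 < v $ i"
    and eig: "adj_mat N E *\<^sub>v v = \<mu> \<cdot>\<^sub>v v"
  shows "spec_rad N E = \<mu>"
proof -
  have A: "adj_mat N E \<in> carrier_mat N N" by (simp add: adj_mat_def)
  have "v \<noteq> 0\<^sub>v N" using pos[OF \<open>0 < N\<close>] \<open>0 < N\<close> by auto
  then have ev: "eigenvalue (adj_mat N E) \<mu>"
    using v eig A unfolding eigenvalue_def eigenvector_def by auto
  have "\<bar>\<mu>'\<bar> \<le> \<mu>" if "eigenvalue (adj_mat N E) \<mu>'" for \<mu>'
    by (rule collatz_wielandt_bound[OF A _ v pos _ that]) (use v eig in \<open>auto simp: adj_mat_def\<close>)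
  then show ?thesis
    unfolding spec_rad_def using finite_eigenvalues[OF A] ev
    by (intro Max_eqI) (auto intro: order.trans[OF abs_ge_self])
qed

lemma plus_inverse_strict_mono:
  fixes a b :: real
  assumes "1 < a" "a < b"
  shows "a + 1 / a < b + 1 / b"
proof -
  have "1 / a - 1 / b = (b - a) / (a * b)"
    using assms by (simp add: field_simps)
  also have "\<dots> < b - a"
    using assms by (simp add: divide_less_eq less_1_mult)
  finally show ?thesis by simp
qed

text \<open>For \<open>\<lambda> = t + 1/t\<close>: \<open>pendant_val t k\<close> solves \<open>x\<^sub>k\<^sub>-\<^sub>1 + x\<^sub>k\<^sub>+\<^sub>1 = \<lambda> x\<^sub>k\<close> with \<open>x\<^sub>-\<^sub>1 = 0\<close>,
  that is, the eigenvector along a pendant path at distance \<open>k\<close> from its end. \<open>arm_val r t k\<close> is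
  the solution at distance \<open>k\<close> from a vertex carrying \<open>r\<close> pendant paths of length 2 whose
  vertices take the values \<open>t * pendant_val t 1\<close> and \<open>t * pendant_val t 0\<close>; the equations at that
  vertex force its coefficients \<open>arm_grow\<close> and \<open>arm_decay\<close>, written in \<open>X = t\<^sup>2\<close>.\<close>

definition pendant_val :: "real \<Rightarrow> nat \<Rightarrow> real" where
  "pendant_val t k = t ^ (k + 1) - 1 / t ^ (k + 1)"

definition arm_grow :: "nat \<Rightarrow> real \<Rightarrow> real" where
  "arm_grow r X = X\<^sup>2 - (real r - 1) * (X + 1)"

definition arm_decay :: "nat \<Rightarrow> real \<Rightarrow> real" where
  "arm_decay r X = (real r - 1) * (X + 1) - 1 / X"

definition arm_val :: "nat \<Rightarrow> real \<Rightarrow> nat \<Rightarrow> real" where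
  "arm_val r t k = arm_grow r (t\<^sup>2) * t ^ k + arm_decay r (t\<^sup>2) / t ^ k"

lemma pendant_val_step:
  "t \<noteq> 0 \<Longrightarrow> pendant_val t k + pendant_val t (Suc (Suc k)) = (t + 1 / t) * pendant_val t (Suc k)"
  by (simp add: pendant_val_def field_simps)

lemma pendant_val_end: "t \<noteq> 0 \<Longrightarrow> pendant_val t 1 = (t + 1 / t) * pendant_val t 0"
  by (simp add: pendant_val_def field_simps power2_eq_square)

lemma arm_val_step:
  "t \<noteq> 0 \<Longrightarrow> arm_val r t k + arm_val r t (Suc (Suc k)) = (t + 1 / t) * arm_val r t (Suc k)"
  by (simp add: arm_val_def field_simps)

lemma arm_val_hub:
  "t \<noteq> 0 \<Longrightarrow> arm_val r t 1 + real r * (t * pendant_val t 1) = (t + 1 / t) * arm_val r t 0"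
  by (simp add: arm_val_def arm_grow_def arm_decay_def pendant_val_def field_simps
      power2_eq_square power3_eq_cube)

lemma arm_val_twig:
  "t \<noteq> 0 \<Longrightarrow> arm_val r t 0 + t * pendant_val t 0 = (t + 1 / t) * (t * pendant_val t 1)"
  by (simp add: arm_val_def arm_grow_def arm_decay_def pendant_val_def field_simps
      power2_eq_square power3_eq_cube)

lemma pendant_val_pos:
  assumes "1 < t"
  shows "0 < pendant_val t k"
proof -
  have "1 < t ^ (k + 1)" using one_less_power[OF assms, of "k + 1"] by simp
  then have "1 / t ^ (k + 1) < t ^ (k + 1)" by (simp add: divide_less_eq less_1_mult)
  then show ?thesis by (simp add: pendant_val_def)
qed

lemma arm_decay_pos:
  assumes "1 < X" "2 \<le> r"
  shows "0 < arm_decay r X"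
proof -
  have "X + 1 \<le> (real r - 1) * (X + 1)"
    using assms by (simp add: mult_le_cancel_right1)
  moreover have "1 / X < 1" using assms by simp
  ultimately show ?thesis using assms unfolding arm_decay_def by linarith
qed

lemma arm_val_pos:
  assumes "1 < t" "2 \<le> r" "0 \<le> arm_grow r (t\<^sup>2)"
  shows "0 < arm_val r t k"
proof -
  have "0 < arm_decay r (t\<^sup>2)"
    using assms by (intro arm_decay_pos) (simp_all add: one_less_power)
  then show ?thesis
    using assms by (simp add: arm_val_def add_nonneg_pos)
qed

lemma arm_grow_gap:
  assumes "r < s" "0 \<le> X + 1"
  shows "arm_grow s X + (X + 1) \<le> arm_grow r X"
proof -
  have "1 * (X + 1) \<le> (real s - real r) * (X + 1)"
    using assms by (intro mult_right_mono) auto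
  then show ?thesis by (simp add: arm_grow_def algebra_simps)
qed

lemma arm_grow_nonneg_above_root:
  assumes "1 \<le> X\<^sub>0" "X\<^sub>0 \<le> X" "arm_grow s X\<^sub>0 = 0" "1 \<le> s"
  shows "0 \<le> arm_grow s X"
proof -
  define c where "c = real s - 1"
  have c: "0 \<le> c" "X\<^sub>0\<^sup>2 = c * (X\<^sub>0 + 1)"
    using assms by (simp_all add: c_def arm_grow_def)
  have "c \<le> X\<^sub>0"
  proof (rule ccontr)
    assume "\<not> c \<le> X\<^sub>0"
    then have "X\<^sub>0 * X\<^sub>0 < c * X\<^sub>0" using assms(1) by (intro mult_strict_right_mono) auto
    then show False using c by (simp add: power2_eq_square algebra_simps)
  qed
  have "arm_grow s X = (X - X\<^sub>0) * (X + X\<^sub>0 - c) + (X\<^sub>0\<^sup>2 - c * (X\<^sub>0 + 1))"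
    by (simp add: arm_grow_def c_def algebra_simps power2_eq_square)
  then show ?thesis
    using c \<open>c \<le> X\<^sub>0\<close> assms by simp
qed

lemma arm_grow_threshold:
  assumes "2 \<le> s"
  obtains t\<^sub>0 where "1 < t\<^sub>0" "t\<^sub>0 \<le> real s" "arm_grow s (t\<^sub>0\<^sup>2) = 0"
    "\<And>t. t\<^sub>0 \<le> t \<Longrightarrow> 0 \<le> arm_grow s (t\<^sup>2)"
proof -
  define S where "S = real s"
  have at_one: "arm_grow s (1\<^sup>2) < 0"
    using assms by (simp add: arm_grow_def)
  have "arm_grow s (S\<^sup>2) = S ^ 3 * (S - 1) + S * (S - 1) + 1"
    by (simp add: arm_grow_def S_def algebra_simps power2_eq_square power3_eq_cube
        power_numeral_reduce)
  then have at_s: "0 < arm_grow s (S\<^sup>2)"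
    using assms unfolding S_def by (simp add: add_nonneg_pos)
  have "continuous_on {1..S} (\<lambda>t. arm_grow s (t\<^sup>2))"
    unfolding arm_grow_def by (intro continuous_intros)
  then obtain t\<^sub>0 where t\<^sub>0: "1 \<le> t\<^sub>0" "t\<^sub>0 \<le> S" "arm_grow s (t\<^sub>0\<^sup>2) = 0"
    using IVT'[of "\<lambda>t. arm_grow s (t\<^sup>2)" 1 0 S] at_one at_s assms by (auto simp: S_def)
  have "1 < t\<^sub>0" using t\<^sub>0 at_one by (cases "t\<^sub>0 = 1") auto
  moreover have "0 \<le> arm_grow s (t\<^sup>2)" if "t\<^sub>0 \<le> t" for t
    using t\<^sub>0 that assms
    by (intro arm_grow_nonneg_above_root[of "t\<^sub>0\<^sup>2"]) (auto intro: power_mono one_le_power)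
  ultimately show thesis using that t\<^sub>0 by (simp add: S_def)
qed

definition arm_ratio :: "nat \<Rightarrow> real \<Rightarrow> nat \<Rightarrow> real" where
  "arm_ratio r X q = arm_decay r X / (arm_grow r X * X ^ q + arm_decay r X)"

definition secular :: "nat \<Rightarrow> nat \<Rightarrow> nat \<Rightarrow> nat \<Rightarrow> nat \<Rightarrow> real \<Rightarrow> real" where
  "secular r s h q1 q2 X =
     arm_ratio r X q1 + arm_ratio s X q2 - 1 / (X ^ (h + 1) - 1) - (X - 2) / (X - 1)"

definition root_defect :: "nat \<Rightarrow> nat \<Rightarrow> nat \<Rightarrow> nat \<Rightarrow> nat \<Rightarrow> real \<Rightarrow> real" where
  "root_defect r s h q1 q2 t =
     pendant_val t (h - 1) * arm_val r t q1 * arm_val s t q2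
     + arm_val r t (q1 - 1) * pendant_val t h * arm_val s t q2
     + arm_val s t (q2 - 1) * pendant_val t h * arm_val r t q1
     - (t + 1 / t) * (pendant_val t h * arm_val r t q1 * arm_val s t q2)"

lemma pendant_val_pred:
  assumes "1 < t" "1 \<le> h"
  shows "pendant_val t (h - 1) = pendant_val t h * (1 / t - (t - 1 / t) / ((t\<^sup>2) ^ (h + 1) - 1))"
proof -
  obtain k where h: "h = Suc k" using assms by (cases h) auto
  define T where "T = t ^ h"
  have T: "1 < T" "1 < T * t"
    using assms by (simp_all add: T_def one_less_power less_1_mult)
  have "(t\<^sup>2) ^ (h + 1) = (t ^ (h + 1))\<^sup>2"
    by (metis power_mult mult.commute)
  then have X: "(t\<^sup>2) ^ (h + 1) = (T * t)\<^sup>2"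
    by (simp add: T_def mult.commute)
  have P: "pendant_val t (h - 1) = T - 1 / T" "pendant_val t h = T * t - 1 / (T * t)"
    by (simp_all add: pendant_val_def T_def h)
  have "(T * t)\<^sup>2 - 1 \<noteq> 0"
    using one_less_power[OF T(2), of 2] by simp
  then show ?thesis
    unfolding P X using T assms by (simp add: field_simps power2_eq_square)
qed

lemma arm_val_pred:
  assumes "1 < t" "1 \<le> q" "2 \<le> r" "0 \<le> arm_grow r (t\<^sup>2)"
  shows "arm_val r t (q - 1) = arm_val r t q * (1 / t + (t - 1 / t) * arm_ratio r (t\<^sup>2) q)"
proof -
  obtain k where q: "q = Suc k" using assms by (cases q) auto
  define G D T where "G = arm_grow r (t\<^sup>2)" and "D = arm_decay r (t\<^sup>2)" and "T = t ^ k"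
  define den where "den = G * (T * t)\<^sup>2 + D"
  have "0 < D" using assms by (simp add: D_def arm_decay_pos one_less_power)
  moreover have "0 < T" using assms by (simp add: T_def)
  moreover have "0 \<le> G" using assms by (simp add: G_def)
  ultimately have "0 < den"
    by (simp add: den_def add_nonneg_pos)
  have "(t\<^sup>2) ^ q = (T * t)\<^sup>2"
    by (metis T_def q power_Suc2 power_mult mult.commute)
  then have ratio: "arm_ratio r (t\<^sup>2) q = D / den"
    by (simp add: arm_ratio_def G_def D_def den_def)
  have "arm_val r t q = G * (T * t) + D / (T * t)"
    by (simp add: arm_val_def G_def D_def T_def q mult.commute)
  also have "\<dots> = den / (T * t)"
    using \<open>0 < T\<close> assms(1) by (simp add: den_def field_simps power2_eq_square)
  finally have val: "arm_val r t q = den / (T * t)" .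
  have "arm_val r t q * (1 / t + (t - 1 / t) * arm_ratio r (t\<^sup>2) q)
      = den / (T * t * t) + (t - 1 / t) * D / (T * t)"
    unfolding val ratio using \<open>0 < den\<close> \<open>0 < T\<close> assms(1) by (simp add: field_simps)
  also have "\<dots> = G * T + D / T"
    using \<open>0 < T\<close> assms(1) by (simp add: den_def field_simps power2_eq_square)
  also have "\<dots> = arm_val r t (q - 1)"
    by (simp add: arm_val_def G_def D_def T_def q)
  finally show ?thesis ..
qed

lemma root_defect_eq:
  assumes "1 < t" "1 \<le> h" "1 \<le> q1" "1 \<le> q2" "2 \<le> r" "2 \<le> s"
    "0 \<le> arm_grow r (t\<^sup>2)" "0 \<le> arm_grow s (t\<^sup>2)"
  shows "root_defect r s h q1 q2 t
    = (t - 1 / t) * pendant_val t h * arm_val r t q1 * arm_val s t q2 * secular r s h q1 q2 (t\<^sup>2)"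
proof -
  define E where "E = (t\<^sup>2) ^ (h + 1) - 1"
  have "1 < t\<^sup>2" using assms(1) by (simp add: one_less_power)
  then have "1 < (t\<^sup>2) ^ (h + 1)" using one_less_power[of "t\<^sup>2" "h + 1"] by simp
  with \<open>1 < t\<^sup>2\<close> have "t\<^sup>2 - 1 \<noteq> 0" "E \<noteq> 0"
    by (simp_all add: E_def)
  moreover have P: "pendant_val t (h - 1) = pendant_val t h * (1 / t - (t - 1 / t) / E)"
    unfolding E_def using assms by (intro pendant_val_pred)
  moreover have R: "arm_val r t (q1 - 1) = arm_val r t q1 * (1 / t + (t - 1 / t) * arm_ratio r (t\<^sup>2) q1)"
    and S: "arm_val s t (q2 - 1) = arm_val s t q2 * (1 / t + (t - 1 / t) * arm_ratio s (t\<^sup>2) q2)"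
    using assms by (intro arm_val_pred; simp)+
  moreover have sec: "secular r s h q1 q2 (t\<^sup>2)
      = arm_ratio r (t\<^sup>2) q1 + arm_ratio s (t\<^sup>2) q2 - 1 / E - (t\<^sup>2 - 2) / (t\<^sup>2 - 1)"
    by (simp add: secular_def E_def)
  ultimately show ?thesis
    using assms(1) unfolding root_defect_def P R S sec by (simp add: field_simps power2_eq_square)
qed

lemma root_defect_sgn:
  assumes "1 < t" "1 \<le> h" "1 \<le> q1" "1 \<le> q2" "2 \<le> r" "2 \<le> s"
    "0 \<le> arm_grow r (t\<^sup>2)" "0 \<le> arm_grow s (t\<^sup>2)"
  shows "sgn (root_defect r s h q1 q2 t) = sgn (secular r s h q1 q2 (t\<^sup>2))"
proof -
  have "1 / t < t" using assms(1) by (simp add: divide_less_eq less_1_mult)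
  then have "0 < (t - 1 / t) * pendant_val t h * arm_val r t q1 * arm_val s t q2"
    using assms by (simp add: pendant_val_pos arm_val_pos)
  then show ?thesis
    unfolding root_defect_eq[OF assms] sgn_mult[of "(t - 1 / t) * _ * _ * _"] by simp
qed

lemma continuous_on_root_defect: "0 < a \<Longrightarrow> continuous_on {a..b} (root_defect r s h q1 q2)"
  unfolding root_defect_def pendant_val_def arm_val_def arm_grow_def arm_decay_def
  by (intro continuous_intros) auto

lemma arm_ratio_denom_pos:
  assumes "1 < X" "2 \<le> r" "0 \<le> arm_grow r X"
  shows "0 < arm_grow r X * X ^ q + arm_decay r X"
  using assms arm_decay_pos[OF assms(1,2)] by (simp add: add_nonneg_pos)

lemma arm_ratio_nonneg:
  assumes "1 < X" "2 \<le> r" "0 \<le> arm_grow r X"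
  shows "0 \<le> arm_ratio r X q"
  unfolding arm_ratio_def
  using arm_ratio_denom_pos[OF assms] arm_decay_pos[OF assms(1,2)] by (simp add: divide_nonneg_pos)

lemma secular_pos_at_threshold:
  assumes X: "1 < X" and "1 \<le> h" "2 \<le> r" "2 \<le> s"
    and "0 \<le> arm_grow r X" and "arm_grow s X = 0"
  shows "0 < secular r s h q1 q2 X"
proof -
  have "arm_ratio s X q2 = 1"
    using assms arm_decay_pos[OF X, of s] by (simp add: arm_ratio_def)
  moreover have "1 - (X - 2) / (X - 1) = 1 / (X - 1)"
    using X by (simp add: field_simps)
  moreover have "1 / (X ^ (h + 1) - 1) < 1 / (X - 1)"
  proof -
    have "X < X ^ (h + 1)"
      using power_strict_increasing[of 1 "h + 1" X] X \<open>1 \<le> h\<close> by simp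
    then show ?thesis using X by (simp add: frac_less2)
  qed
  moreover have "0 \<le> arm_ratio r X q1"
    using assms by (intro arm_ratio_nonneg)
  ultimately show ?thesis
    unfolding secular_def by linarith
qed

lemma arm_ratio_lt_quarter:
  fixes S :: real
  assumes S: "3 \<le> S" and r: "2 \<le> r" "real r \<le> S" and q: "1 \<le> q"
  shows "arm_ratio r (S\<^sup>2) q < 1 / 4"
proof -
  define X where "X = S\<^sup>2"
  have X: "9 \<le> X" "1 < X"
    using power_mono[OF S, of 2] by (simp_all add: X_def)
  have grow: "2 * S ^ 3 \<le> arm_grow r X"
  proof -
    have "(real r - 1) * (X + 1) \<le> (S - 1) * (X + 1)"
      using r X by (intro mult_right_mono) auto
    moreover have "X\<^sup>2 - (S - 1) * (X + 1) - 2 * S ^ 3 = S ^ 3 * (S - 3) + S * (S - 1) + 1"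
      by (simp add: X_def algebra_simps power2_eq_square power3_eq_cube power_numeral_reduce)
    moreover have "0 \<le> S ^ 3 * (S - 3)" "0 \<le> S * (S - 1)"
      using S by simp_all
    ultimately show ?thesis by (simp add: arm_grow_def)
  qed
  have decay: "arm_decay r X \<le> S * (X + 1)"
  proof -
    have "(real r - 1) * (X + 1) \<le> S * (X + 1)"
      using r X by (intro mult_right_mono) auto
    moreover have "0 \<le> 1 / X" using X by simp
    ultimately show ?thesis unfolding arm_decay_def by linarith
  qed
  have "0 \<le> S ^ 3" using S by simp
  with grow have grow_nonneg: "0 \<le> arm_grow r X" by linarith
  have "2 * S ^ 3 * X \<le> arm_grow r X * X ^ q"
    using grow grow_nonneg X q power_increasing[of 1 q X] by (intro mult_mono) auto
  moreover have "3 * (S * (X + 1)) < 2 * S ^ 3 * X"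
  proof -
    have "3 * S \<le> S ^ 3" "9 * S ^ 3 \<le> S ^ 3 * X" "0 < S ^ 3"
      using S X power_mono[OF S, of 2] by (simp_all add: power3_eq_cube power2_eq_square X_def)
    moreover have "3 * (S * (X + 1)) = 3 * S ^ 3 + 3 * S" "2 * S ^ 3 * X = 2 * (S ^ 3 * X)"
      by (simp_all add: X_def algebra_simps power2_eq_square power3_eq_cube)
    ultimately show ?thesis by linarith
  qed
  ultimately have "4 * arm_decay r X < arm_grow r X * X ^ q + arm_decay r X"
    using decay by linarith
  moreover have "0 < arm_grow r X * X ^ q + arm_decay r X"
    using arm_ratio_denom_pos[of X r q] X r grow_nonneg by simp
  ultimately show ?thesis
    by (simp add: arm_ratio_def X_def[symmetric] divide_simps)
qed

lemma secular_neg_at_square: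
  assumes "3 \<le> s" "2 \<le> r" "r \<le> s" "1 \<le> q1" "1 \<le> q2"
  shows "secular r s h q1 q2 ((real s)\<^sup>2) < 0"
proof -
  define X where "X = (real s)\<^sup>2"
  have X: "9 \<le> X"
    using power_mono[of 3 "real s" 2] assms by (simp add: X_def)
  have "arm_ratio r X q1 < 1 / 4" "arm_ratio s X q2 < 1 / 4"
    using arm_ratio_lt_quarter[of "real s" r q1] arm_ratio_lt_quarter[of "real s" s q2] assms
    by (simp_all add: X_def)
  moreover have "7 / 8 \<le> (X - 2) / (X - 1)"
    using X by (simp add: divide_simps)
  moreover have "0 < 1 / (X ^ (h + 1) - 1)"
    using X one_less_power[of X "h + 1"] by simp
  ultimately show ?thesis
    unfolding secular_def X_def[symmetric] by linarith
qed

lemma secular_gap_poly: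
  fixes X :: real
  assumes X: "1 < X" "2 * (X + 1) \<le> X\<^sup>2"
  shows "(X\<^sup>2 - X - 1) / (X ^ 3 + 2 * X\<^sup>2 - X - 1)
    + (X ^ 3 - X\<^sup>2 - X - 1) / ((X - 1) * (2 * X\<^sup>2 + 2 * X + 1)) < (X - 2) / (X - 1)"
proof -
  have "2 < X"
  proof (rule ccontr)
    assume "\<not> 2 < X"
    then have "X * X \<le> 2 * X" using X(1) by (intro mult_right_mono) auto
    then show False using X(2) by (simp add: power2_eq_square)
  qed
  define cubic where "cubic = X ^ 3 - X\<^sup>2 - 3 * X - 2"
  have "cubic = X * (X\<^sup>2 - 2 * X - 2) + (X - 2) * (X + 1)"
    by (simp add: cubic_def algebra_simps power2_eq_square power3_eq_cube)
  moreover have "0 \<le> X * (X\<^sup>2 - 2 * X - 2)" using X by simp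
  moreover have "0 < (X - 2) * (X + 1)" using \<open>2 < X\<close> by simp
  ultimately have "0 < cubic" by linarith
  define C Q d B N where "C = X ^ 3 + 2 * X\<^sup>2 - X - 1" and "Q = 2 * X\<^sup>2 + 2 * X + 1"
    and "d = X - 1" and "B = X\<^sup>2 - X - 1" and "N = X ^ 3 - X\<^sup>2 - X - 1"
  have "0 \<le> X\<^sup>2" by simp
  then have pos: "0 < C" "0 < Q" "0 < d"
    using \<open>0 < cubic\<close> X by (simp_all add: C_def Q_def d_def cubic_def add_pos_pos)
  have "(X - 2) / d - B / C - N / (d * Q) = ((X - 2) * Q * C - B * d * Q - N * C) / (d * Q * C)"
    using pos by (simp add: field_simps)
  also have "(X - 2) * Q * C - B * d * Q - N * C = X * (X\<^sup>2 * cubic + X + 1)"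
    by (simp add: C_def Q_def d_def B_def N_def cubic_def algebra_simps power2_eq_square
        power3_eq_cube)
  finally have "(X - 2) / d - B / C - N / (d * Q) = X * (X\<^sup>2 * cubic + X + 1) / (d * Q * C)" .
  moreover have "0 < X * (X\<^sup>2 * cubic + X + 1) / (d * Q * C)"
    using pos X \<open>0 < cubic\<close> by (simp add: add_pos_pos)
  ultimately show ?thesis
    unfolding C_def[symmetric] Q_def[symmetric] d_def[symmetric] B_def[symmetric] N_def[symmetric]
    by linarith
qed

lemma arm_ratio_two_le:
  assumes X: "1 < X" and r: "2 \<le> r" and grow: "X + 1 \<le> arm_grow r X"
  shows "arm_ratio r X 2 \<le> (X\<^sup>2 - X - 1) / (X ^ 3 + 2 * X\<^sup>2 - X - 1)"
proof -
  define G D where "G = arm_grow r X" and "D = arm_decay r X"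
  have "0 < 1 / X" using X by simp
  then have D: "0 < D" "D \<le> X\<^sup>2 - X - 1"
    using arm_decay_pos[OF X r] grow unfolding D_def arm_decay_def arm_grow_def by linarith+
  have "D * (X + 1) \<le> (X\<^sup>2 - X - 1) * G"
    using D grow X by (intro mult_mono) (simp_all add: G_def)
  then have "D * (X + 1) * X\<^sup>2 \<le> (X\<^sup>2 - X - 1) * G * X\<^sup>2"
    by (simp add: mult_right_mono)
  then have "D * (X ^ 3 + 2 * X\<^sup>2 - X - 1) \<le> (X\<^sup>2 - X - 1) * (G * X\<^sup>2 + D)"
    by (simp add: algebra_simps power2_eq_square power3_eq_cube)
  moreover have "0 < X ^ 3" "0 < X\<^sup>2" using X by simp_all
  then have "0 < G * X\<^sup>2 + D" "0 < X ^ 3 + 2 * X\<^sup>2 - X - 1"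
    using D grow X by (simp add: G_def add_pos_pos, linarith)
  ultimately show ?thesis
    by (simp add: arm_ratio_def G_def[symmetric] D_def[symmetric] divide_simps)
qed

lemma arm_ratio_Suc_bound:
  assumes X: "1 < X" and s: "2 \<le> s" "0 \<le> arm_grow s X" and N: "0 \<le> N" and Y: "0 < Y"
    and gt: "N / (N + X * Y) < arm_ratio s X (Suc k)"
  shows "N / (N + Y) < arm_ratio s X k"
proof -
  define a D where "a = arm_grow s X * X ^ k" and "D = arm_decay s X"
  have "0 \<le> a" "0 < D"
    using X s arm_decay_pos[OF X s(1)] by (simp_all add: a_def D_def)
  have ratio: "arm_ratio s X (Suc k) = D / (a * X + D)" "arm_ratio s X k = D / (a + D)"
    by (simp_all add: arm_ratio_def a_def D_def algebra_simps)
  have pos: "0 < a * X + D" "0 < a + D" "0 < N + X * Y" "0 < N + Y"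
    using \<open>0 \<le> a\<close> \<open>0 < D\<close> X N Y by (simp_all add: add_nonneg_pos add_pos_pos)
  have "N * (a * X + D) < D * (N + X * Y)"
    using gt pos unfolding ratio by (simp add: divide_simps)
  then have "(N * a) * X < (D * Y) * X"
    by (simp add: algebra_simps)
  then have "N * a < D * Y"
    using X by simp
  then have "N * (a + D) < D * (N + Y)"
    by (simp add: algebra_simps)
  then show ?thesis
    using pos unfolding ratio by (simp add: divide_simps)
qed

lemma cubic_div_cube_minus_one:
  fixes X :: real
  assumes "1 < X"
  shows "(X ^ 3 - X\<^sup>2 - X - 1) / (X ^ 3 - 1) = (X - 2) / (X - 1) + 1 / (X ^ 3 - 1)"
proof -
  define d Q where "d = X - 1" and "Q = X\<^sup>2 + X + 1"
  have pos: "0 < Q" "0 < d" using assms by (simp_all add: d_def Q_def add_pos_pos)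
  have "X ^ 3 - 1 = d * Q" "X ^ 3 - X\<^sup>2 - X - 1 = (X - 2) * Q + 1"
    by (simp_all add: d_def Q_def algebra_simps power2_eq_square power3_eq_cube)
  then show ?thesis
    unfolding d_def[symmetric] using pos by (simp add: field_simps)
qed

lemma secular_shift_pos:
  assumes X: "1 < X" and r: "2 \<le> r" "X + 1 \<le> arm_grow r X" and s: "2 \<le> s" "0 \<le> arm_grow s X"
    and m: "3 \<le> m" and root: "secular r s (m - 1) 2 (Suc k) X = 0"
  shows "0 < secular r s 2 m k X"
proof -
  define N where "N = X ^ 3 - X\<^sup>2 - X - 1"
  have "2 * (X + 1) \<le> real r * (X + 1)"
    using r X by (intro mult_right_mono) auto
  moreover have "(real r - 1) * (X + 1) = real r * (X + 1) - (X + 1)"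
    by (simp add: algebra_simps)
  ultimately have sq: "2 * (X + 1) \<le> X\<^sup>2"
    using r(2) unfolding arm_grow_def by linarith
  have "X * (2 * (X + 1)) \<le> X * X\<^sup>2"
    using sq X by (intro mult_left_mono) auto
  moreover have "1 \<le> X * X" using less_1_mult[OF X X] by simp
  ultimately have "0 \<le> N"
    using X by (simp add: N_def power2_eq_square power3_eq_cube algebra_simps)
  have den: "(X - 1) * (2 * X\<^sup>2 + 2 * X + 1) = N + X * (X\<^sup>2 + X)"
    by (simp add: N_def algebra_simps power2_eq_square power3_eq_cube)
  have gap: "(X\<^sup>2 - X - 1) / (X ^ 3 + 2 * X\<^sup>2 - X - 1) + N / (N + X * (X\<^sup>2 + X)) < (X - 2) / (X - 1)"
    using secular_gap_poly[OF X sq] unfolding den[symmetric] unfolding N_def .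
  have "m - 1 + 1 = m" using m by simp
  then have "arm_ratio r X 2 + arm_ratio s X (Suc k) - 1 / (X ^ m - 1) - (X - 2) / (X - 1) = 0"
    using root by (simp only: secular_def)
  moreover have "1 < X ^ m" using one_less_power[OF X, of m] m by simp
  then have "0 < 1 / (X ^ m - 1)" by simp
  ultimately have gt: "N / (N + X * (X\<^sup>2 + X)) < arm_ratio s X (Suc k)"
    using gap arm_ratio_two_le[OF X r] by linarith
  have "N / (N + (X\<^sup>2 + X)) < arm_ratio s X k"
    using arm_ratio_Suc_bound[OF X s \<open>0 \<le> N\<close> _ gt] X by (simp add: add_pos_pos)
  moreover have "N + (X\<^sup>2 + X) = X ^ 3 - 1"
    by (simp add: N_def algebra_simps)
  then have "N / (N + (X\<^sup>2 + X)) = (X - 2) / (X - 1) + 1 / (X ^ 3 - 1)"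
    unfolding N_def using cubic_div_cube_minus_one[OF X] by simp
  moreover have "0 \<le> arm_ratio r X m"
    using X r by (intro arm_ratio_nonneg) auto
  ultimately show ?thesis
    unfolding secular_def by simp
qed

lemma root_defect_root_above:
  assumes a: "1 < a" "a \<le> real s" and rs: "2 \<le> r" "r \<le> s" "3 \<le> s"
    and grow: "\<And>t. a \<le> t \<Longrightarrow> 0 \<le> arm_grow r (t\<^sup>2) \<and> 0 \<le> arm_grow s (t\<^sup>2)"
    and hq: "1 \<le> h" "1 \<le> q1" "1 \<le> q2"
    and pos: "0 < secular r s h q1 q2 (a\<^sup>2)"
  obtains t where "a < t" "t \<le> real s" "root_defect r s h q1 q2 t = 0"
proof -
  have sgn: "sgn (root_defect r s h q1 q2 t) = sgn (secular r s h q1 q2 (t\<^sup>2))" if "a \<le> t" for t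
    using grow[OF that] a that hq rs by (intro root_defect_sgn) auto
  have at_a: "0 < root_defect r s h q1 q2 a"
    using sgn[of a] pos by (metis order_refl sgn_greater)
  moreover have "root_defect r s h q1 q2 (real s) < 0"
    using sgn[OF a(2)] secular_neg_at_square[OF rs(3,1,2) hq(2,3)] by (metis sgn_less)
  ultimately obtain t where "a \<le> t" "t \<le> real s" "root_defect r s h q1 q2 t = 0"
    using IVT2'[of "root_defect r s h q1 q2" "real s" 0 a] a continuous_on_root_defect[of a]
    by auto
  with at_a have "a < t" "t \<le> real s" "root_defect r s h q1 q2 t = 0"
    by (auto simp: le_less)
  then show thesis by (rule that)
qed

lemma tree_edges_iff:
  "(a, b) \<in> tree_edges r s h q1 q2 \<longleftrightarrow>
    (a < h \<and> b = a + 1) \<or> (a = 0 \<and> b = h + 1) \<or> (h + 1 \<le> a \<and> a < h + q1 \<and> b = a + 1) \<or>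
    (a = 0 \<and> b = h + q1 + 1) \<or> (h + q1 + 1 \<le> a \<and> a < h + q1 + q2 \<and> b = a + 1) \<or>
    (a = h + q1 \<and> (\<exists>k<r. b = h + q1 + q2 + 1 + 2 * k)) \<or>
    (\<exists>k<r. a = h + q1 + q2 + 1 + 2 * k \<and> b = a + 1) \<or>
    (a = h + q1 + q2 \<and> (\<exists>k<s. b = h + q1 + q2 + 1 + 2 * r + 2 * k)) \<or>
    (\<exists>k<s. a = h + q1 + q2 + 1 + 2 * r + 2 * k \<and> b = a + 1)"
  unfolding tree_edges_def path_edges_def Let_def
  by (simp only: Un_iff mem_Collect_eq singleton_iff prod.inject) blast

locale tree_layout =
  fixes r s h q1 q2 :: nat
  assumes h_pos: "1 \<le> h" and q1_ge: "2 \<le> q1" and q2_ge: "2 \<le> q2"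
begin

abbreviation "v1 \<equiv> h + q1"
abbreviation "v2 \<equiv> h + q1 + q2"
abbreviation "tw1 \<equiv> h + q1 + q2 + 1"
abbreviation "tw2 \<equiv> h + q1 + q2 + 1 + 2 * r"
abbreviation "nv \<equiv> h + q1 + q2 + 1 + 2 * r + 2 * s"

definition nbrs :: "nat \<Rightarrow> nat set" where
  "nbrs i = {j. j < nv \<and> ((i, j) \<in> tree_edges r s h q1 q2 \<or> (j, i) \<in> tree_edges r s h q1 q2)}"

lemmas nbrs_iff = nbrs_def tree_edges_iff

lemma nbrs_root: "nbrs 0 = {1, h + 1, v1 + 1}"
  using h_pos q1_ge q2_ge unfolding nbrs_iff by auto

lemma nbrs_pendant: "0 < i \<Longrightarrow> i < h \<Longrightarrow> nbrs i = {i - 1, i + 1}"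
  using h_pos q1_ge q2_ge unfolding nbrs_iff by auto

lemma nbrs_pendant_end: "nbrs h = {h - 1}"
  using h_pos q1_ge q2_ge unfolding nbrs_iff by auto

lemma nbrs_arm1_start: "nbrs (h + 1) = {0, h + 2}"
  using h_pos q1_ge q2_ge unfolding nbrs_iff by auto

lemma nbrs_arm1: "h + 1 < i \<Longrightarrow> i < v1 \<Longrightarrow> nbrs i = {i - 1, i + 1}"
  using h_pos q1_ge q2_ge unfolding nbrs_iff by auto

lemma nbrs_v1: "nbrs v1 = insert (v1 - 1) ((\<lambda>k. tw1 + 2 * k) ` {..<r})"
  using h_pos q1_ge q2_ge unfolding nbrs_iff by auto

lemma nbrs_arm2_start: "nbrs (v1 + 1) = {0, v1 + 2}"
  using h_pos q1_ge q2_ge unfolding nbrs_iff by auto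

lemma nbrs_arm2: "v1 + 1 < i \<Longrightarrow> i < v2 \<Longrightarrow> nbrs i = {i - 1, i + 1}"
  using h_pos q1_ge q2_ge unfolding nbrs_iff by auto

lemma nbrs_v2: "nbrs v2 = insert (v2 - 1) ((\<lambda>k. tw2 + 2 * k) ` {..<s})"
  using h_pos q1_ge q2_ge unfolding nbrs_iff by auto

lemma nbrs_twig1_mid: "k < r \<Longrightarrow> nbrs (tw1 + 2 * k) = {v1, tw1 + 2 * k + 1}"
  using h_pos q1_ge q2_ge unfolding nbrs_iff by (auto; presburger)

lemma nbrs_twig1_leaf: "k < r \<Longrightarrow> nbrs (tw1 + 2 * k + 1) = {tw1 + 2 * k}"
  using h_pos q1_ge q2_ge unfolding nbrs_iff by (auto; presburger)

lemma nbrs_twig2_mid: "k < s \<Longrightarrow> nbrs (tw2 + 2 * k) = {v2, tw2 + 2 * k + 1}"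
  using h_pos q1_ge q2_ge unfolding nbrs_iff by (auto; presburger)

lemma nbrs_twig2_leaf: "k < s \<Longrightarrow> nbrs (tw2 + 2 * k + 1) = {tw2 + 2 * k}"
  using h_pos q1_ge q2_ge unfolding nbrs_iff by (auto; presburger)

text \<open>Each of the three branches at the centre carries its own solution of the path recurrence,
  scaled by the product of the values the other two branches take at the centre, so that all
  three agree there.\<close>

definition vert_val :: "real \<Rightarrow> nat \<Rightarrow> real" where
  "vert_val t i =
    (if i \<le> h then pendant_val t (h - i) * (arm_val r t q1 * arm_val s t q2)
     else if i \<le> v1 then arm_val r t (v1 - i) * (pendant_val t h * arm_val s t q2)
     else if i \<le> v2 then arm_val s t (v2 - i) * (pendant_val t h * arm_val r t q1)
     else if i < tw2 then
       t * pendant_val t (if even (i - tw1) then 1 else 0) * (pendant_val t h * arm_val s t q2)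
     else t * pendant_val t (if even (i - tw2) then 1 else 0) * (pendant_val t h * arm_val r t q1))"

lemma vert_val_pos:
  assumes "1 < t" "2 \<le> r" "2 \<le> s" "0 \<le> arm_grow r (t\<^sup>2)" "0 \<le> arm_grow s (t\<^sup>2)"
  shows "0 < vert_val t i"
  using assms by (simp add: vert_val_def pendant_val_pos arm_val_pos)

lemma eigen_eq_root:
  "sum (vert_val t) (nbrs 0) = (t + 1 / t) * vert_val t 0 + root_defect r s h q1 q2 t"
proof -
  have "1 \<noteq> h + 1" "1 \<noteq> v1 + 1" "h + 1 \<noteq> v1 + 1" using h_pos q1_ge by auto
  then have "sum (vert_val t) (nbrs 0) = vert_val t 1 + vert_val t (h + 1) + vert_val t (v1 + 1)"
    by (simp add: nbrs_root add.assoc)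
  then show ?thesis
    using h_pos q1_ge q2_ge by (simp add: vert_val_def root_defect_def algebra_simps)
qed

lemma eigen_eq_pendant:
  assumes t: "t \<noteq> 0" and i: "0 < i" "i \<le> h"
  shows "sum (vert_val t) (nbrs i) = (t + 1 / t) * vert_val t i"
proof -
  define W where "W = arm_val r t q1 * arm_val s t q2"
  have val: "vert_val t j = pendant_val t (h - j) * W" if "j \<le> h" for j
    using that by (simp add: vert_val_def W_def)
  show ?thesis
  proof (cases "i = h")
    case True
    then show ?thesis
      using h_pos pendant_val_end[OF t] by (simp add: nbrs_pendant_end val)
  next
    case False
    define k where "k = h - (i + 1)"
    have "vert_val t (i - 1) = pendant_val t (Suc (Suc k)) * W"
      "vert_val t (i + 1) = pendant_val t k * W" "vert_val t i = pendant_val t (Suc k) * W"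
      using i False val[of "i - 1"] val[of "i + 1"] val[of i]
      by (simp_all add: k_def Suc_diff_Suc Suc_diff_le)
    then show ?thesis
      using i False arg_cong[where f = "\<lambda>x. x * W", OF pendant_val_step[OF t, of k]]
      by (simp add: nbrs_pendant algebra_simps)
  qed
qed

lemma eigen_eq_arm1:
  assumes t: "t \<noteq> 0" and i: "h < i" "i < v1"
  shows "sum (vert_val t) (nbrs i) = (t + 1 / t) * vert_val t i"
proof -
  define W where "W = pendant_val t h * arm_val s t q2"
  have val: "vert_val t j = arm_val r t (v1 - j) * W" if "h < j" "j \<le> v1" for j
    using that by (simp add: vert_val_def W_def)
  have step: "arm_val r t (Suc (Suc k)) * W + arm_val r t k * W
      = (t + 1 / t) * (arm_val r t (Suc k) * W)" for k
    using arg_cong[where f = "\<lambda>x. x * W", OF arm_val_step[OF t, of r k]]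
    by (simp add: algebra_simps)
  consider "i = h + 1" | "h + 1 < i"
    using i by linarith
  then show ?thesis
  proof cases
    case 1
    define k where "k = q1 - 2"
    have idx: "q1 = Suc (Suc k)" "v1 - i = Suc k" "v1 - (h + 2) = k"
      using 1 q1_ge by (simp_all add: k_def)
    have "vert_val t 0 = arm_val r t (Suc (Suc k)) * W"
      unfolding idx(1)[symmetric] by (simp add: vert_val_def W_def mult_ac)
    moreover have "vert_val t (h + 2) = arm_val r t k * W"
      "vert_val t i = arm_val r t (Suc k) * W"
      using 1 q1_ge val[of "h + 2"] val[of i] idx(2,3) by simp_all
    ultimately show ?thesis
      unfolding 1 nbrs_arm1_start by (simp add: step)
  next
    case 2
    define k where "k = v1 - (i + 1)"
    have k: "v1 - (i + 1) = k" "v1 - i = Suc k" "v1 - (i - 1) = Suc (Suc k)"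
      using 2 i unfolding k_def by arith+
    have "vert_val t (i - 1) = arm_val r t (Suc (Suc k)) * W"
      "vert_val t (i + 1) = arm_val r t k * W" "vert_val t i = arm_val r t (Suc k) * W"
      using 2 i k by (simp_all add: val)
    then show ?thesis
      using 2 i by (simp add: nbrs_arm1 step)
  qed
qed

lemma eigen_eq_hub1:
  assumes t: "t \<noteq> 0"
  shows "sum (vert_val t) (nbrs v1) = (t + 1 / t) * vert_val t v1"
proof -
  define W where "W = pendant_val t h * arm_val s t q2"
  have val: "vert_val t j = arm_val r t (v1 - j) * W" if "h < j" "j \<le> v1" for j
    using that by (simp add: vert_val_def W_def)
  have inj: "inj_on (\<lambda>k. tw1 + 2 * k) {..<r}" by (rule inj_onI) simp
  have "v1 - 1 \<notin> (\<lambda>k. tw1 + 2 * k) ` {..<r}" by auto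
  then have "sum (vert_val t) (nbrs v1)
      = vert_val t (v1 - 1) + sum (vert_val t) ((\<lambda>k. tw1 + 2 * k) ` {..<r})"
    unfolding nbrs_v1 by simp
  also have "\<dots> = vert_val t (v1 - 1) + (\<Sum>k<r. vert_val t (tw1 + 2 * k))"
    unfolding sum.reindex[OF inj] comp_def ..
  also have "\<dots> = arm_val r t 1 * W + real r * (t * pendant_val t 1 * W)"
  proof -
    have "v1 - (v1 - 1) = 1" using q1_ge by simp
    then have "vert_val t (v1 - 1) = arm_val r t 1 * W"
      using val[of "v1 - 1"] q1_ge by (simp only:)
    moreover have "(\<Sum>k<r. vert_val t (tw1 + 2 * k)) = (\<Sum>k<r. t * pendant_val t 1 * W)"
      by (rule sum.cong) (simp_all add: vert_val_def W_def)
    ultimately show ?thesis by simp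
  qed
  also have "\<dots> = (t + 1 / t) * vert_val t v1"
    using q1_ge arg_cong[where f = "\<lambda>x. x * W", OF arm_val_hub[OF t, of r]]
    by (simp add: val algebra_simps)
  finally show ?thesis .
qed

lemma eigen_eq_arm2:
  assumes t: "t \<noteq> 0" and i: "v1 < i" "i < v2"
  shows "sum (vert_val t) (nbrs i) = (t + 1 / t) * vert_val t i"
proof -
  define W where "W = pendant_val t h * arm_val r t q1"
  have val: "vert_val t j = arm_val s t (v2 - j) * W" if "v1 < j" "j \<le> v2" for j
    using that by (simp add: vert_val_def W_def)
  have step: "arm_val s t (Suc (Suc k)) * W + arm_val s t k * W
      = (t + 1 / t) * (arm_val s t (Suc k) * W)" for k
    using arg_cong[where f = "\<lambda>x. x * W", OF arm_val_step[OF t, of s k]]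
    by (simp add: algebra_simps)
  consider "i = v1 + 1" | "v1 + 1 < i"
    using i by linarith
  then show ?thesis
  proof cases
    case 1
    define k where "k = q2 - 2"
    have idx: "q2 = Suc (Suc k)" "v2 - i = Suc k" "v2 - (v1 + 2) = k"
      using 1 q2_ge by (simp_all add: k_def)
    have "vert_val t 0 = arm_val s t (Suc (Suc k)) * W"
      unfolding idx(1)[symmetric] by (simp add: vert_val_def W_def mult_ac)
    moreover have "vert_val t (v1 + 2) = arm_val s t k * W"
      "vert_val t i = arm_val s t (Suc k) * W"
      using 1 q2_ge val[of "v1 + 2"] val[of i] idx(2,3) by simp_all
    ultimately show ?thesis
      unfolding 1 nbrs_arm2_start by (simp add: step)
  next
    case 2
    define k where "k = v2 - (i + 1)"
    have k: "v2 - (i + 1) = k" "v2 - i = Suc k" "v2 - (i - 1) = Suc (Suc k)"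
      using 2 i unfolding k_def by arith+
    have "vert_val t (i - 1) = arm_val s t (Suc (Suc k)) * W"
      "vert_val t (i + 1) = arm_val s t k * W" "vert_val t i = arm_val s t (Suc k) * W"
      using 2 i k by (simp_all add: val)
    then show ?thesis
      using 2 i by (simp add: nbrs_arm2 step)
  qed
qed

lemma eigen_eq_hub2:
  assumes t: "t \<noteq> 0"
  shows "sum (vert_val t) (nbrs v2) = (t + 1 / t) * vert_val t v2"
proof -
  define W where "W = pendant_val t h * arm_val r t q1"
  have val: "vert_val t j = arm_val s t (v2 - j) * W" if "v1 < j" "j \<le> v2" for j
    using that by (simp add: vert_val_def W_def)
  have inj: "inj_on (\<lambda>k. tw2 + 2 * k) {..<s}" by (rule inj_onI) simp
  have "v2 - 1 \<notin> (\<lambda>k. tw2 + 2 * k) ` {..<s}" by auto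
  then have "sum (vert_val t) (nbrs v2)
      = vert_val t (v2 - 1) + sum (vert_val t) ((\<lambda>k. tw2 + 2 * k) ` {..<s})"
    unfolding nbrs_v2 by simp
  also have "\<dots> = vert_val t (v2 - 1) + (\<Sum>k<s. vert_val t (tw2 + 2 * k))"
    unfolding sum.reindex[OF inj] comp_def ..
  also have "\<dots> = arm_val s t 1 * W + real s * (t * pendant_val t 1 * W)"
  proof -
    have "v2 - (v2 - 1) = 1" using q2_ge by simp
    then have "vert_val t (v2 - 1) = arm_val s t 1 * W"
      using val[of "v2 - 1"] q2_ge by (simp only:)
    moreover have "(\<Sum>k<s. vert_val t (tw2 + 2 * k)) = (\<Sum>k<s. t * pendant_val t 1 * W)"
      by (rule sum.cong) (simp_all add: vert_val_def W_def)
    ultimately show ?thesis by simp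
  qed
  also have "\<dots> = (t + 1 / t) * vert_val t v2"
    using q2_ge arg_cong[where f = "\<lambda>x. x * W", OF arm_val_hub[OF t, of s]]
    by (simp add: val algebra_simps)
  finally show ?thesis .
qed

lemma eigen_eq_twigs1:
  assumes t: "t \<noteq> 0" and i: "tw1 \<le> i" "i < tw2"
  shows "sum (vert_val t) (nbrs i) = (t + 1 / t) * vert_val t i"
proof -
  define W where "W = pendant_val t h * arm_val s t q2"
  define k where "k = (i - tw1) div 2"
  have "k < r" using i by (simp add: k_def less_mult_imp_div_less)
  have "i = tw1 + 2 * k \<or> i = tw1 + 2 * k + 1" unfolding k_def using i by presburger
  then show ?thesis
  proof
    assume mid: "i = tw1 + 2 * k"
    have "vert_val t v1 = arm_val r t 0 * W" "vert_val t (tw1 + 2 * k + 1) = t * pendant_val t 0 * W"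
      "vert_val t i = t * pendant_val t 1 * W"
      using mid \<open>k < r\<close> q1_ge by (simp_all add: vert_val_def W_def)
    moreover have "v1 \<noteq> tw1 + 2 * k + 1" by simp
    ultimately have "sum (vert_val t) (nbrs i) = arm_val r t 0 * W + t * pendant_val t 0 * W"
      unfolding mid nbrs_twig1_mid[OF \<open>k < r\<close>] by simp
    then show ?thesis
      using \<open>vert_val t i = t * pendant_val t 1 * W\<close>
        arg_cong[where f = "\<lambda>x. x * W", OF arm_val_twig[OF t, of r]]
      by (simp add: algebra_simps)
  next
    assume leaf: "i = tw1 + 2 * k + 1"
    have "vert_val t (tw1 + 2 * k) = t * pendant_val t 1 * W" "vert_val t i = t * pendant_val t 0 * W"
      using leaf \<open>k < r\<close> by (simp_all add: vert_val_def W_def)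
    then have "sum (vert_val t) (nbrs i) = t * pendant_val t 1 * W"
      unfolding leaf nbrs_twig1_leaf[OF \<open>k < r\<close>] by simp
    then show ?thesis
      using \<open>vert_val t i = t * pendant_val t 0 * W\<close> pendant_val_end[OF t] by (simp add: mult_ac)
  qed
qed

lemma eigen_eq_twigs2:
  assumes t: "t \<noteq> 0" and i: "tw2 \<le> i" "i < nv"
  shows "sum (vert_val t) (nbrs i) = (t + 1 / t) * vert_val t i"
proof -
  define W where "W = pendant_val t h * arm_val r t q1"
  define k where "k = (i - tw2) div 2"
  have "k < s" using i by (simp add: k_def less_mult_imp_div_less)
  have "i = tw2 + 2 * k \<or> i = tw2 + 2 * k + 1" unfolding k_def using i by presburger
  then show ?thesis
  proof
    assume mid: "i = tw2 + 2 * k"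
    have "vert_val t v2 = arm_val s t 0 * W" "vert_val t (tw2 + 2 * k + 1) = t * pendant_val t 0 * W"
      "vert_val t i = t * pendant_val t 1 * W"
      using mid \<open>k < s\<close> q2_ge by (simp_all add: vert_val_def W_def)
    moreover have "v2 \<noteq> tw2 + 2 * k + 1" by simp
    ultimately have "sum (vert_val t) (nbrs i) = arm_val s t 0 * W + t * pendant_val t 0 * W"
      unfolding mid nbrs_twig2_mid[OF \<open>k < s\<close>] by simp
    then show ?thesis
      using \<open>vert_val t i = t * pendant_val t 1 * W\<close>
        arg_cong[where f = "\<lambda>x. x * W", OF arm_val_twig[OF t, of s]]
      by (simp add: algebra_simps)
  next
    assume leaf: "i = tw2 + 2 * k + 1"
    have "vert_val t (tw2 + 2 * k) = t * pendant_val t 1 * W" "vert_val t i = t * pendant_val t 0 * W"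
      using leaf \<open>k < s\<close> by (simp_all add: vert_val_def W_def)
    then have "sum (vert_val t) (nbrs i) = t * pendant_val t 1 * W"
      unfolding leaf nbrs_twig2_leaf[OF \<open>k < s\<close>] by simp
    then show ?thesis
      using \<open>vert_val t i = t * pendant_val t 0 * W\<close> pendant_val_end[OF t] by (simp add: mult_ac)
  qed
qed

lemma adj_mat_mult_vec_nth:
  assumes "i < nv"
  shows "(adj_mat nv (tree_edges r s h q1 q2) *\<^sub>v vec nv f) $ i = sum f (nbrs i)"
proof -
  have "(adj_mat nv (tree_edges r s h q1 q2) *\<^sub>v vec nv f) $ i = (\<Sum>j\<in>{0..<nv}.
      (if (i, j) \<in> tree_edges r s h q1 q2 \<or> (j, i) \<in> tree_edges r s h q1 q2 then 1 else 0) * f j)"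
    using assms by (simp add: adj_mat_def mult_mat_vec_def scalar_prod_def)
  also have "\<dots> = (\<Sum>j\<in>{0..<nv}. if j \<in> nbrs i then f j else 0)"
    by (rule sum.cong) (auto simp: nbrs_def)
  also have "\<dots> = sum f {j \<in> {0..<nv}. j \<in> nbrs i}"
    by (rule sum.inter_filter[symmetric]) simp
  also have "{j \<in> {0..<nv}. j \<in> nbrs i} = nbrs i"
    by (auto simp: nbrs_def)
  finally show ?thesis .
qed

lemma tree_vec_eigen:
  assumes t: "t \<noteq> 0" and root: "root_defect r s h q1 q2 t = 0"
  shows "adj_mat nv (tree_edges r s h q1 q2) *\<^sub>v vec nv (vert_val t) = (t + 1 / t) \<cdot>\<^sub>v vec nv (vert_val t)"
proof (rule eq_vecI)
  fix i assume "i < dim_vec ((t + 1 / t) \<cdot>\<^sub>v vec nv (vert_val t))"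
  then have i: "i < nv" by simp
  consider "i = 0" | "0 < i" "i \<le> h" | "h < i" "i < v1" | "i = v1" | "v1 < i" "i < v2" | "i = v2"
    | "tw1 \<le> i" "i < tw2" | "tw2 \<le> i" "i < nv"
    using i by linarith
  then have "sum (vert_val t) (nbrs i) = (t + 1 / t) * vert_val t i"
    by cases (use root eigen_eq_root eigen_eq_pendant[OF t] eigen_eq_arm1[OF t] eigen_eq_hub1[OF t]
        eigen_eq_arm2[OF t] eigen_eq_hub2[OF t] eigen_eq_twigs1[OF t] eigen_eq_twigs2[OF t] in auto)
  then show "(adj_mat nv (tree_edges r s h q1 q2) *\<^sub>v vec nv (vert_val t)) $ i
      = ((t + 1 / t) \<cdot>\<^sub>v vec nv (vert_val t)) $ i"
    using i adj_mat_mult_vec_nth[OF i, of "vert_val t"] by simp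
qed (simp add: adj_mat_def)

end

lemma rho_tree_eq_root:
  assumes "1 \<le> h" "2 \<le> q1" "2 \<le> q2" "2 \<le> r" "2 \<le> s" "1 < t"
    "0 \<le> arm_grow r (t\<^sup>2)" "0 \<le> arm_grow s (t\<^sup>2)" "root_defect r s h q1 q2 t = 0"
  shows "rho_tree r s h q1 q2 = t + 1 / t"
proof -
  interpret tree_layout r s h q1 q2
    using assms by unfold_locales
  have "tree_order r s h q1 q2 = nv" by (simp add: tree_order_def)
  then show ?thesis
    unfolding rho_tree_def using assms vert_val_pos tree_vec_eigen
    by (intro spec_rad_eq_pos_eigenvector[where v = "vec nv (vert_val t)"]) auto
qed

theorem lemma5p4:
  fixes r1 r2 n h0 j :: nat
  assumes "2 \<le> r1" and "r1 < r2"
    and "n \<ge> 5 + 2 * (r1 + r2)"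
    and "h0 = n - 5 - 2 * (r1 + r2)" and "h0 \<ge> 3"
    and "j \<le> h0 - 3"
  shows "rho_tree r1 r2 2 (h0 - j) (2 + j) > rho_tree r1 r2 (h0 - (j + 1)) 2 (2 + (j + 1))"
proof -
  define m q where "m = h0 - j" and "q = 2 + j"
  have m: "3 \<le> m" and q: "2 \<le> q" and r: "2 \<le> r1" "r1 \<le> r2" "3 \<le> r2"
    using assms by (auto simp: m_def q_def)
  obtain t\<^sub>0 where t\<^sub>0: "1 < t\<^sub>0" "t\<^sub>0 \<le> real r2" "arm_grow r2 (t\<^sub>0\<^sup>2) = 0"
    and grow2: "\<And>t. t\<^sub>0 \<le> t \<Longrightarrow> 0 \<le> arm_grow r2 (t\<^sup>2)"
    using arm_grow_threshold[of r2] r by auto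
  have gap: "t\<^sup>2 + 1 \<le> arm_grow r1 (t\<^sup>2)" if "t\<^sub>0 \<le> t" for t
    using grow2[OF that] arm_grow_gap[OF assms(2), of "t\<^sup>2"] by simp
  have grow: "0 \<le> arm_grow r1 (t\<^sup>2) \<and> 0 \<le> arm_grow r2 (t\<^sup>2)" if "t\<^sub>0 \<le> t" for t
    using grow2[OF that] gap[OF that] zero_le_power2[of t] by linarith
  have pos\<^sub>0: "0 < secular r1 r2 (m - 1) 2 (Suc q) (t\<^sub>0\<^sup>2)"
    using t\<^sub>0 grow[of t\<^sub>0] m r by (intro secular_pos_at_threshold) (auto simp: one_less_power)
  have "1 \<le> m - 1" using m by simp
  obtain t\<^sub>2 where t\<^sub>2: "t\<^sub>0 < t\<^sub>2" "t\<^sub>2 \<le> real r2" "root_defect r1 r2 (m - 1) 2 (Suc q) t\<^sub>2 = 0"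
    using root_defect_root_above[OF t\<^sub>0(1,2) r grow \<open>1 \<le> m - 1\<close> _ _ pos\<^sub>0] by auto
  have "1 < t\<^sub>2\<^sup>2" using t\<^sub>0 t\<^sub>2 by (simp add: one_less_power)
  have "sgn (root_defect r1 r2 (m - 1) 2 (Suc q) t\<^sub>2) = sgn (secular r1 r2 (m - 1) 2 (Suc q) (t\<^sub>2\<^sup>2))"
    using t\<^sub>0 t\<^sub>2 grow[of t\<^sub>2] m r by (intro root_defect_sgn) auto
  with t\<^sub>2(3) have "secular r1 r2 (m - 1) 2 (Suc q) (t\<^sub>2\<^sup>2) = 0"
    by (simp add: sgn_0_0)
  then have "0 < secular r1 r2 2 m q (t\<^sub>2\<^sup>2)"
    using \<open>1 < t\<^sub>2\<^sup>2\<close> gap[of t\<^sub>2] grow[of t\<^sub>2] t\<^sub>0 t\<^sub>2 m r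
    by (intro secular_shift_pos) auto
  then obtain t\<^sub>1 where t\<^sub>1: "t\<^sub>2 < t\<^sub>1" "t\<^sub>1 \<le> real r2" "root_defect r1 r2 2 m q t\<^sub>1 = 0"
    using root_defect_root_above[of t\<^sub>2 r2 r1 2 m q] t\<^sub>0 t\<^sub>2 grow m q r by auto
  have rho2: "rho_tree r1 r2 (m - 1) 2 (Suc q) = t\<^sub>2 + 1 / t\<^sub>2"
    using t\<^sub>0 t\<^sub>2 grow[of t\<^sub>2] m q r by (intro rho_tree_eq_root) auto
  have rho1: "rho_tree r1 r2 2 m q = t\<^sub>1 + 1 / t\<^sub>1"
    using t\<^sub>0 t\<^sub>1 t\<^sub>2 grow[of t\<^sub>1] m q r by (intro rho_tree_eq_root) auto
  have "t\<^sub>2 + 1 / t\<^sub>2 < t\<^sub>1 + 1 / t\<^sub>1"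
    using t\<^sub>0 t\<^sub>1 t\<^sub>2 by (intro plus_inverse_strict_mono) auto
  moreover have idx: "h0 - j = m" "h0 - (j + 1) = m - 1" "2 + j = q" "2 + (j + 1) = Suc q"
    by (simp_all add: m_def q_def)
  ultimately show ?thesis
    unfolding idx rho1 rho2 by simp
qed

end
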